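(* Let $p\geq r\geq2$ and let $A$ be a symmetric nonnegative $r$-matrix of order $n$. If $\mathbf{x}=(x_1,\ldots,x_n)$ is a positive vector with $|\mathbf{x}|_p=1$ satisfying \[ \lambda x_k^{p-1}=\frac1r\frac{\partial P_A(\mathbf{x})}{\partial x_k},\qquad k=1,\ldots,n, \] for some real $\lambda$, then $\lambda=\lambda^{(p)}(A)$.
   Context: A cubical $r$-matrix of order $n$ is a function $A$ on $[n]^r$ with entries $a_{i_1,\ldots,i_r}$; symmetric means invariant under permutations of indices. $P_A(\mathbf{x})=\sum a_{i_1,\ldots,i_r}x_{i_1}\cdots x_{i_r}$ and $\lambda^{(p)}(A)=\max\{P_A(\mathbf{x}):\mathbf{x}\in\mathbb{R}^n,\ |\mathbf{x}|_p=1\}$. *)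

theory Defs
  imports "HOL-Analysis.Analysis" "HOL-Library.Multiset"
begin

text \<open>A cubical r-matrix of order n is a function on index lists of length r with
entries in {0..<n}; vectors of R^n are functions nat => real supported on {..<n}.\<close>

definition idx :: "nat \<Rightarrow> nat \<Rightarrow> nat list set" where
  "idx r n = {is. length is = r \<and> set is \<subseteq> {..<n}}"

definition symmetric_rmatrix :: "nat \<Rightarrow> nat \<Rightarrow> (nat list \<Rightarrow> real) \<Rightarrow> bool" where
  "symmetric_rmatrix r n A \<longleftrightarrow>
     (\<forall>is\<in>idx r n. \<forall>js. mset js = mset is \<longrightarrow> A js = A is)"

definition nonneg_rmatrix :: "nat \<Rightarrow> nat \<Rightarrow> (nat list \<Rightarrow> real) \<Rightarrow> bool" where
  "nonneg_rmatrix r n A \<longleftrightarrow> (\<forall>is\<in>idx r n. A is \<ge> 0)"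

definition PA :: "nat \<Rightarrow> nat \<Rightarrow> (nat list \<Rightarrow> real) \<Rightarrow> (nat \<Rightarrow> real) \<Rightarrow> real" where
  "PA r n A x = (\<Sum>is\<in>idx r n. A is * (\<Prod>j<r. x (is ! j)))"

definition pnorm :: "real \<Rightarrow> nat \<Rightarrow> (nat \<Rightarrow> real) \<Rightarrow> real" where
  "pnorm p n x = (\<Sum>i<n. \<bar>x i\<bar> powr p) powr (1 / p)"

definition lambda_p :: "real \<Rightarrow> nat \<Rightarrow> nat \<Rightarrow> (nat list \<Rightarrow> real) \<Rightarrow> real" where
  "lambda_p p r n A =
     (SUP x\<in>{x. (\<forall>i\<ge>n. x i = 0) \<and> pnorm p n x = 1}. PA r n A x)"

end

theory Submission imports Defs begin

text \<open>Multiplying the eigen-equation by \<open>x\<^sub>k\<close> and summing over \<open>k\<close>, Euler's identity for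
the homogeneous form \<open>P\<^sub>A\<close> gives \<open>\<lambda> = P\<^sub>A(x)\<close>. For \<open>y\<close> on the unit \<open>p\<close>-sphere put
\<open>u\<^sub>k = |y\<^sub>k|/x\<^sub>k\<close>. AM-GM bounds each monomial \<open>y\<^sub>i\<^sub>1\<cdots>y\<^sub>i\<^sub>r\<close> by
\<open>x\<^sub>i\<^sub>1\<cdots>x\<^sub>i\<^sub>r (u\<^sub>i\<^sub>1\<^sup>r + \<dots> + u\<^sub>i\<^sub>r\<^sup>r)/r\<close>, and a weighted Euler identity plus the
eigen-equation turn the resulting bound into \<open>\<lambda> \<Sum>\<^sub>k u\<^sub>k\<^sup>r x\<^sub>k\<^sup>p\<close>. Since \<open>r \<le> p\<close>, Young's
inequality gives \<open>u\<^sub>k\<^sup>r x\<^sub>k\<^sup>p \<le> (r/p)|y\<^sub>k|\<^sup>p + (1 - r/p) x\<^sub>k\<^sup>p\<close>, whence \<open>P\<^sub>A(y) \<le> \<lambda>\<close>.\<close>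

lemma prod_le_sum_power_div:
  fixes u :: "nat \<Rightarrow> real"
  assumes "r \<ge> 1" "\<And>j. j < r \<Longrightarrow> u j \<ge> 0"
  shows "(\<Prod>j<r. u j) \<le> (\<Sum>j<r. u j ^ r) / r"
proof -
  have "(\<Prod>j<r. u j ^ r) powr (1 / card {..<r}) \<le> (\<Sum>j<r. u j ^ r / card {..<r})"
    using assms by (intro arith_geom_mean) (auto simp: lessThan_empty_iff)
  moreover have "(\<Prod>j<r. u j ^ r) = (\<Prod>j<r. u j) ^ r" by (simp add: prod_power_distrib)
  moreover have nonneg: "(\<Prod>j<r. u j) \<ge> 0" using assms by (auto intro: prod_nonneg)
  moreover have "((\<Prod>j<r. u j) ^ r) powr (1 / r) = (\<Prod>j<r. u j)"
  proof (cases "(\<Prod>j<r. u j) = 0")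
    case True then show ?thesis using assms by (simp only: True) simp
  next
    case False
    then have "(\<Prod>j<r. u j) > 0" using nonneg by linarith
    then show ?thesis using assms by (simp add: powr_realpow[symmetric] powr_powr)
  qed
  ultimately show ?thesis by (simp add: sum_divide_distrib)
qed

lemma Youngs_inequality_power_ratio:
  fixes a b p :: real and r :: nat
  assumes "a \<ge> 0" "b > 0" "r \<ge> 1" "real r \<le> p"
  shows "(a / b) ^ r * b powr p \<le> (r / p) * a powr p + (1 - r / p) * b powr p"
proof (cases "a = 0")
  case True
  then show ?thesis using assms by (simp add: zero_power)
next
  case False
  then have a: "a > 0" using assms by simp
  have p: "p > 0" using assms by simp
  have "(a / b) ^ r * b powr p = a powr r * b powr (p - r)"
    using a assms by (simp add: powr_realpow[symmetric] powr_divide powr_diff)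
  also have "\<dots> = (a powr p) powr (r / p) * (b powr p) powr (1 - r / p)"
    using p by (simp add: powr_powr algebra_simps)
  also have "\<dots> \<le> (r / p) * a powr p + (1 - r / p) * b powr p"
    using a assms p by (intro Youngs_inequality_0) auto
  finally show ?thesis .
qed

lemma pnorm_eq_1_imp_sum_powr:
  assumes "p > 0" "pnorm p n y = 1"
  shows "(\<Sum>i<n. \<bar>y i\<bar> powr p) = 1"
proof -
  let ?s = "\<Sum>i<n. \<bar>y i\<bar> powr p"
  have s: "?s powr (1 / p) = 1" using assms(2) by (simp add: pnorm_def)
  then have "?s \<noteq> 0" by auto
  moreover have "?s \<ge> 0" by (auto intro: sum_nonneg)
  ultimately have "?s = (?s powr (1 / p)) powr p" using assms(1) by (simp add: powr_powr)
  with s show ?thesis by simp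
qed

lemma idx_nth_less: "is \<in> idx r n \<Longrightarrow> j < r \<Longrightarrow> is ! j < n"
  by (auto simp: idx_def dest: nth_mem)

lemma PA_nonneg:
  assumes "nonneg_rmatrix r n A" "\<forall>i<n. x i \<ge> 0"
  shows "PA r n A x \<ge> 0"
  unfolding PA_def using assms idx_nth_less
  by (intro sum_nonneg mult_nonneg_nonneg prod_nonneg) (auto simp: nonneg_rmatrix_def)

lemma has_field_derivative_PA_coordinate:
  "((\<lambda>t. PA r n A (x(k := t))) has_field_derivative
     (\<Sum>is\<in>idx r n. A is * (\<Sum>j<r. (if is ! j = k then 1 else 0) *
        (\<Prod>l\<in>{..<r}-{j}. x (is ! l))))) (at (x k))"
  unfolding PA_def
proof (intro DERIV_sum DERIV_cmult)
  fix "is"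
  have "((\<lambda>t. \<Prod>l<r. (x(k := t)) (is ! l)) has_field_derivative
      (\<Sum>j<r. (if is ! j = k then 1 else 0) * (\<Prod>l\<in>{..<r}-{j}. (x(k := x k)) (is ! l)))) (at (x k))"
  proof (rule has_field_derivative_prod)
    fix j
    show "((\<lambda>t. (x(k := t)) (is ! j)) has_field_derivative (if is ! j = k then 1 else 0)) (at (x k))"
      by (cases "is ! j = k") (auto intro!: derivative_eq_intros)
  qed
  then show "((\<lambda>t. \<Prod>l<r. (x(k := t)) (is ! l)) has_field_derivative
      (\<Sum>j<r. (if is ! j = k then 1 else 0) * (\<Prod>l\<in>{..<r}-{j}. x (is ! l)))) (at (x k))"
    by simp
qed

lemma coordinate_times_partial_PA:
  "x k * deriv (\<lambda>t. PA r n A (x(k := t))) (x k)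
     = (\<Sum>is\<in>idx r n. A is * (\<Prod>l<r. x (is ! l)) * (\<Sum>j<r. if is ! j = k then 1 else 0))"
proof -
  have "x k * (A is * (\<Sum>j<r. (if is ! j = k then 1 else 0) * (\<Prod>l\<in>{..<r}-{j}. x (is ! l))))
          = A is * (\<Prod>l<r. x (is ! l)) * (\<Sum>j<r. if is ! j = k then 1 else 0)" for "is"
    by (auto simp: sum_distrib_left prod.remove[of "{..<r}"] mult_ac intro!: sum.cong)
  then show ?thesis
    by (simp add: DERIV_imp_deriv[OF has_field_derivative_PA_coordinate] sum_distrib_left)
qed

lemma sum_weighted_occurrences:
  fixes g :: "nat \<Rightarrow> real"
  assumes "is \<in> idx r n"
  shows "(\<Sum>k<n. g k * (\<Sum>j<r. if is ! j = k then 1 else 0)) = (\<Sum>j<r. g (is ! j))"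
proof -
  have "(\<Sum>k<n. g k * (\<Sum>j<r. if is ! j = k then 1 else 0))
          = (\<Sum>k<n. \<Sum>j<r. if is ! j = k then g k else 0)"
    by (intro sum.cong refl) (simp add: sum_distrib_left if_distrib[of "\<lambda>t. g _ * t"] cong: if_cong)
  also have "\<dots> = (\<Sum>j<r. \<Sum>k<n. if is ! j = k then g k else 0)"
    by (rule sum.swap)
  also have "\<dots> = (\<Sum>j<r. g (is ! j))"
    using idx_nth_less[OF assms] by simp
  finally show ?thesis .
qed

text \<open>For \<open>g = 1\<close> this is Euler's identity \<open>\<Sum>\<^sub>k x\<^sub>k \<partial>\<^sub>kP\<^sub>A(x) = r P\<^sub>A(x)\<close>.\<close>

lemma sum_weighted_coordinate_times_partial_PA:
  "(\<Sum>k<n. g k * (x k * deriv (\<lambda>t. PA r n A (x(k := t))) (x k)))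
     = (\<Sum>is\<in>idx r n. A is * (\<Prod>l<r. x (is ! l)) * (\<Sum>j<r. g (is ! j)))"
proof -
  have "(\<Sum>k<n. g k * (x k * deriv (\<lambda>t. PA r n A (x(k := t))) (x k)))
          = (\<Sum>is\<in>idx r n. A is * (\<Prod>l<r. x (is ! l))
               * (\<Sum>k<n. g k * (\<Sum>j<r. if is ! j = k then 1 else 0)))"
    unfolding coordinate_times_partial_PA
    by (simp add: sum_distrib_left mult_ac) (rule sum.swap)
  then show ?thesis by (simp add: sum_weighted_occurrences)
qed

lemma eigen_equation_times_coordinate:
  assumes "x k > 0" "r > 0"
    and "lam * x k powr (p - 1) = (1 / real r) * deriv (\<lambda>t. PA r n A (x(k := t))) (x k)"
  shows "lam * x k powr p = x k * deriv (\<lambda>t. PA r n A (x(k := t))) (x k) / r"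
proof -
  have "lam * x k powr p = x k * (lam * x k powr (p - 1))"
    using assms(1) by (simp add: powr_mult_base mult.left_commute)
  with assms(3) show ?thesis by simp
qed

lemma eigenvalue_eq_PA:
  assumes "r \<ge> 1" "\<forall>i<n. x i > 0" "(\<Sum>i<n. x i powr p) = 1"
    and "\<forall>k<n. lam * x k powr (p - 1)
                = (1 / real r) * deriv (\<lambda>t. PA r n A (x(k := t))) (x k)"
  shows "lam = PA r n A x"
proof -
  have "lam = (\<Sum>k<n. lam * x k powr p)"
    using assms(3) by (simp add: sum_distrib_left[symmetric])
  also have "\<dots> = (\<Sum>k<n. 1 * (x k * deriv (\<lambda>t. PA r n A (x(k := t))) (x k))) / r"
    using assms by (auto simp: sum_divide_distrib intro!: sum.cong eigen_equation_times_coordinate)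
  also have "\<dots> = PA r n A x"
    using assms(1) by (simp only: sum_weighted_coordinate_times_partial_PA) (simp add: PA_def sum_divide_distrib)
  finally show ?thesis .
qed

lemma PA_le_eigenvalue:
  assumes "r \<ge> 1" "real r \<le> p" "nonneg_rmatrix r n A"
    and x_pos: "\<forall>i<n. x i > 0" and x_sphere: "(\<Sum>i<n. x i powr p) = 1"
    and eigen: "\<forall>k<n. lam * x k powr (p - 1)
                = (1 / real r) * deriv (\<lambda>t. PA r n A (x(k := t))) (x k)"
    and y_sphere: "(\<Sum>i<n. \<bar>y i\<bar> powr p) = 1"
  shows "PA r n A y \<le> lam"
proof -
  define u where "u k = \<bar>y k\<bar> / x k" for k
  define dP where "dP k = deriv (\<lambda>t. PA r n A (x(k := t))) (x k)" for k
  have lam_nonneg: "lam \<ge> 0"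
    using eigenvalue_eq_PA[OF assms(1) x_pos x_sphere eigen] PA_nonneg[OF assms(3)] x_pos
    by (simp add: less_imp_le)
  have "A is * (\<Prod>j<r. y (is ! j)) \<le> A is * (\<Prod>l<r. x (is ! l)) * (\<Sum>j<r. u (is ! j) ^ r) / r"
    if "is": "is \<in> idx r n" for "is"
  proof -
    have "(\<Prod>j<r. y (is ! j)) \<le> (\<Prod>j<r. \<bar>y (is ! j)\<bar>)"
      by (metis abs_ge_self abs_prod)
    also have "\<dots> = (\<Prod>l<r. x (is ! l)) * (\<Prod>j<r. u (is ! j))"
      unfolding u_def prod.distrib[symmetric]
      using idx_nth_less[OF "is"] x_pos by (intro prod.cong) force+
    also have "\<dots> \<le> (\<Prod>l<r. x (is ! l)) * ((\<Sum>j<r. u (is ! j) ^ r) / r)"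
      using assms(1) x_pos idx_nth_less[OF "is"]
      by (intro mult_left_mono prod_le_sum_power_div prod_nonneg) (auto simp: u_def less_imp_le)
    finally have "(\<Prod>j<r. y (is ! j)) \<le> (\<Prod>l<r. x (is ! l)) * ((\<Sum>j<r. u (is ! j) ^ r) / r)" .
    moreover have "A is \<ge> 0" using "is" assms(3) by (simp add: nonneg_rmatrix_def)
    ultimately show ?thesis by (metis mult_left_mono mult.assoc times_divide_eq_right)
  qed
  then have "PA r n A y \<le> (\<Sum>is\<in>idx r n. A is * (\<Prod>l<r. x (is ! l)) * (\<Sum>j<r. u (is ! j) ^ r)) / r"
    unfolding PA_def sum_divide_distrib by (rule sum_mono)
  also have "\<dots> = (\<Sum>k<n. u k ^ r * (x k * dP k)) / r"
    by (simp only: dP_def sum_weighted_coordinate_times_partial_PA)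
  also have "\<dots> = (\<Sum>k<n. u k ^ r * (lam * x k powr p))"
    using eigen_equation_times_coordinate[OF _ _ eigen[rule_format]] x_pos assms(1)
    unfolding dP_def sum_divide_distrib by (intro sum.cong refl) simp
  also have "\<dots> = lam * (\<Sum>k<n. (\<bar>y k\<bar> / x k) ^ r * x k powr p)"
    by (simp add: sum_distrib_left u_def mult_ac)
  also have "\<dots> \<le> lam * (\<Sum>k<n. (r / p) * \<bar>y k\<bar> powr p + (1 - r / p) * x k powr p)"
    using lam_nonneg x_pos assms(1,2)
    by (intro mult_left_mono sum_mono Youngs_inequality_power_ratio) auto
  also have "\<dots> = lam"
    by (simp add: sum.distrib sum_distrib_left[symmetric] y_sphere x_sphere flip: sum_divide_distrib)
  finally show ?thesis .
qed

theorem proposition13: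
  fixes p :: real and r n :: nat and A :: "nat list \<Rightarrow> real"
    and x :: "nat \<Rightarrow> real" and lam :: real
  assumes "2 \<le> r" and "real r \<le> p"
    and "symmetric_rmatrix r n A" and "nonneg_rmatrix r n A"
    and "\<forall>i<n. x i > 0" and "\<forall>i\<ge>n. x i = 0"
    and "pnorm p n x = 1"
    and "\<forall>k<n. lam * x k powr (p - 1)
                = (1 / real r) * deriv (\<lambda>t. PA r n A (x(k := t))) (x k)"
  shows "lam = lambda_p p r n A"
proof -
  have r: "r \<ge> 1" and p: "p > 0" using assms(1,2) by auto
  have "(\<Sum>i<n. x i powr p) = (\<Sum>i<n. \<bar>x i\<bar> powr p)"
    using assms(5) by (intro sum.cong) auto
  then have x_sphere: "(\<Sum>i<n. x i powr p) = 1"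
    using pnorm_eq_1_imp_sum_powr[OF p assms(7)] by simp
  have "lam \<in> PA r n A ` {x. (\<forall>i\<ge>n. x i = 0) \<and> pnorm p n x = 1}"
    using eigenvalue_eq_PA[OF r assms(5) x_sphere assms(8)] assms(6,7) by auto
  moreover have "z \<le> lam" if "z \<in> PA r n A ` {x. (\<forall>i\<ge>n. x i = 0) \<and> pnorm p n x = 1}" for z
    using that PA_le_eigenvalue[OF r assms(2,4,5) x_sphere assms(8)] pnorm_eq_1_imp_sum_powr[OF p]
    by auto
  ultimately show ?thesis
    unfolding lambda_p_def by (intro cSup_eq_maximum[symmetric])
qed

end
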